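(* There is an absolute constant $C$ such that for every $\epsilon\in(0,1]$ there is an $\epsilon$-edge differentially private algorithm which, given any graph $G$, outputs a real number $\hat\rho$ with $\mathbb E[|\hat\rho-\rho(G)|]\le C\sqrt{1/\epsilon}$.
   Context: For nonempty $S\subseteq V$, $\rho(S)=|E(S)|/|S|$ with $E(S)$ the edges inside $S$, and $\rho(G)=\max_{\emptyset\ne S\subseteq V}\rho(S)$. Edge-neighboring graphs have the same vertex set and edge sets differing in exactly one edge; an algorithm is $\epsilon$-edge DP if $\Pr[\mathcal A(G)\in O]\le e^\epsilon\Pr[\mathcal A(G')\in O]$ for all edge-neighboring $G,G'$ and all output sets $O$. *)

theory Defs
  imports "HOL-Probability.Probability"
begin

type_synonym graph = "nat set \<times> nat set set"

definition is_graph :: "graph \<Rightarrow> bool" where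
  "is_graph G \<longleftrightarrow> finite (fst G) \<and> fst G \<noteq> {} \<and>
     (\<forall>e \<in> snd G. \<exists>u v. u \<noteq> v \<and> u \<in> fst G \<and> v \<in> fst G \<and> e = {u, v})"

definition edges_in :: "graph \<Rightarrow> nat set \<Rightarrow> nat set set" where
  "edges_in G S = {e \<in> snd G. e \<subseteq> S}"

definition density :: "graph \<Rightarrow> nat set \<Rightarrow> real" where
  "density G S = real (card (edges_in G S)) / real (card S)"

definition max_density :: "graph \<Rightarrow> real" where
  "max_density G = Max {density G S | S. S \<subseteq> fst G \<and> S \<noteq> {}}"

definition edge_neighboring :: "graph \<Rightarrow> graph \<Rightarrow> bool" where
  "edge_neighboring G G' \<longleftrightarrow> is_graph G \<and> is_graph G' \<and> fst G = fst G' \<and>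
     card ((snd G - snd G') \<union> (snd G' - snd G)) = 1"

definition valid_algorithm :: "(graph \<Rightarrow> real measure) \<Rightarrow> bool" where
  "valid_algorithm A \<longleftrightarrow> (\<forall>G. is_graph G \<longrightarrow> prob_space (A G) \<and> sets (A G) = sets borel)"

definition edge_DP :: "real \<Rightarrow> (graph \<Rightarrow> real measure) \<Rightarrow> bool" where
  "edge_DP \<epsilon> A \<longleftrightarrow> (\<forall>G G' U. edge_neighboring G G' \<longrightarrow> U \<in> sets borel \<longrightarrow>
      measure (A G) U \<le> exp \<epsilon> * measure (A G') U)"

end

theory Submission
  imports Defs
begin

text \<open>The algorithm releases sqrt (max 0 (\<rho>(G)^2 + Z)) with Z Laplace noise of scale 1/\<epsilon>.
  The square \<rho>(G)^2 changes by at most 1 between edge-neighbouring graphs, so the Laplace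
  mechanism on it is \<epsilon>-DP and the square root is post-processing. Since
  |sqrt (max 0 x) - \<rho>| \<le> sqrt |x - \<rho>^2|, the expected error is at most
  E sqrt |Z| \<le> 1 / sqrt \<epsilon>.\<close>

lemma finite_graph_edges:
  assumes "is_graph G" shows "finite (snd G)"
proof (rule finite_subset)
  show "snd G \<subseteq> Pow (fst G)" using assms unfolding is_graph_def by auto
  show "finite (Pow (fst G))" using assms unfolding is_graph_def by simp
qed

lemma finite_densities:
  assumes "is_graph G"
  shows "finite {density G S | S. S \<subseteq> fst G \<and> S \<noteq> {}}"
proof -
  have "{density G S | S. S \<subseteq> fst G \<and> S \<noteq> {}} \<subseteq> density G ` Pow (fst G)" by auto
  moreover have "finite (Pow (fst G))" using assms unfolding is_graph_def by simp
  ultimately show ?thesis by (rule finite_subset[OF _ finite_imageI])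
qed

lemma density_le_max_density:
  assumes "is_graph G" "S \<subseteq> fst G" "S \<noteq> {}"
  shows "density G S \<le> max_density G"
  unfolding max_density_def using assms finite_densities by (intro Max_ge) auto

lemma max_density_attained:
  assumes "is_graph G"
  obtains S where "S \<subseteq> fst G" "S \<noteq> {}" "max_density G = density G S"
proof -
  have "fst G \<noteq> {}" using assms unfolding is_graph_def by simp
  then have "max_density G \<in> {density G S | S. S \<subseteq> fst G \<and> S \<noteq> {}}"
    unfolding max_density_def using finite_densities[OF assms] by (intro Max_in) auto
  then show thesis using that by blast
qed

lemma max_density_nonneg:
  assumes "is_graph G" shows "0 \<le> max_density G"
proof -
  obtain S where "max_density G = density G S" using max_density_attained[OF assms] by blast
  then show ?thesis by (simp add: density_def)
qed

lemma density_le_half_card: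
  assumes G: "is_graph G" and S: "finite S" "S \<noteq> {}"
  shows "2 * density G S \<le> real (card S) - 1"
proof -
  have "edges_in G S \<subseteq> {B. B \<subseteq> S \<and> card B = 2}"
    using G unfolding edges_in_def is_graph_def by fastforce
  then have "card (edges_in G S) \<le> card {B. B \<subseteq> S \<and> card B = 2}"
    using S(1) by (intro card_mono) auto
  also have "\<dots> = card S choose 2" using n_subsets[OF S(1)] by simp
  finally have "2 * card (edges_in G S) \<le> card S * (card S - 1)"
    by (simp add: choose_two)
  then have "real (2 * card (edges_in G S)) \<le> real (card S * (card S - 1))"
    by (simp only: of_nat_le_iff)
  moreover have "1 \<le> card S" using S by (simp add: Suc_leI card_gt_0_iff)
  ultimately show ?thesis unfolding density_def by (simp add: of_nat_diff field_simps)
qed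

lemma edges_in_insert_edge: "snd G' = insert e (snd G) \<Longrightarrow> edges_in G' S \<subseteq> insert e (edges_in G S)"
  unfolding edges_in_def by auto

lemma density_mono_insert_edge:
  assumes "finite (snd G)" "snd G' = insert e (snd G)"
  shows "density G S \<le> density G' S"
proof -
  have "card (edges_in G S) \<le> card (edges_in G' S)"
    using assms unfolding edges_in_def by (intro card_mono) auto
  then show ?thesis unfolding density_def by (simp add: divide_right_mono)
qed

lemma density_insert_edge_le:
  assumes "finite (snd G)" "snd G' = insert e (snd G)"
  shows "density G' S \<le> density G S + 1 / real (card S)"
proof -
  have "finite (edges_in G S)" using assms(1) unfolding edges_in_def by simp
  then have "card (edges_in G' S) \<le> card (insert e (edges_in G S))"
    by (intro card_mono edges_in_insert_edge[OF assms(2)]) auto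
  also have "\<dots> \<le> card (edges_in G S) + 1"
    using \<open>finite (edges_in G S)\<close> by (simp add: card_insert_if)
  finally have "density G' S \<le> real (card (edges_in G S) + 1) / real (card S)"
    unfolding density_def by (intro divide_right_mono) auto
  then show ?thesis unfolding density_def by (simp add: add_divide_distrib)
qed

text \<open>If S is densest in G', then r' - r \<le> 1/|S| and r + r' \<le> 2 r' \<le> |S| - 1,
  so r'^2 - r^2 = (r' - r)(r' + r) \<le> 1.\<close>

lemma max_density_insert_edge:
  assumes G: "is_graph G" and G': "is_graph G'"
    and V: "fst G' = fst G" and E: "snd G' = insert e (snd G)"
  shows "max_density G \<le> max_density G'" "max_density G' ^ 2 \<le> max_density G ^ 2 + 1"
proof -
  note finE = finite_graph_edges[OF G]
  define r r' where "r = max_density G" and "r' = max_density G'"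
  show le: "max_density G \<le> max_density G'"
  proof -
    obtain T where T: "T \<subseteq> fst G" "T \<noteq> {}" "max_density G = density G T"
      using max_density_attained[OF G] by blast
    have "density G T \<le> density G' T" by (rule density_mono_insert_edge[OF finE E])
    also have "\<dots> \<le> max_density G'" using T V by (intro density_le_max_density[OF G']) auto
    finally show ?thesis using T(3) by simp
  qed
  obtain S where S: "S \<subseteq> fst G" "S \<noteq> {}" "r' = density G' S"
    using max_density_attained[OF G'] V unfolding r'_def by metis
  have finS: "finite S" using S(1) G unfolding is_graph_def by (meson finite_subset)
  have s: "0 < real (card S)" using finS S(2) by (simp add: card_gt_0_iff)
  have "r' - r \<le> 1 / real (card S)"
    using density_insert_edge_le[OF finE E, of S] density_le_max_density[OF G S(1,2)] S(3)
    unfolding r_def by linarith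
  moreover have "r' + r \<le> real (card S) - 1"
    using density_le_half_card[OF G' finS S(2)] S(3) le unfolding r_def r'_def by linarith
  moreover have "0 \<le> r' - r" "0 \<le> r' + r"
    using le max_density_nonneg[OF G] unfolding r_def r'_def by auto
  ultimately have "(r' - r) * (r' + r) \<le> 1 / real (card S) * (real (card S) - 1)"
    by (intro mult_mono) auto
  also have "\<dots> \<le> 1" using s by (simp add: field_simps)
  finally show "max_density G' ^ 2 \<le> max_density G ^ 2 + 1"
    unfolding r_def r'_def by (simp add: power2_eq_square algebra_simps)
qed

lemma edge_neighboring_insert_edge:
  assumes "edge_neighboring G G'"
  obtains e where "snd G' = insert e (snd G)" | e where "snd G = insert e (snd G')"
proof -
  have "card ((snd G - snd G') \<union> (snd G' - snd G)) = 1"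
    using assms unfolding edge_neighboring_def by blast
  then obtain e where e: "(snd G - snd G') \<union> (snd G' - snd G) = {e}"
    by (rule card_1_singletonE)
  have diff: "(x \<in> snd G \<and> x \<notin> snd G') \<or> (x \<in> snd G' \<and> x \<notin> snd G) \<longleftrightarrow> x = e" for x
    using arg_cong[where f = "\<lambda>A. x \<in> A", OF e] by simp
  show thesis
  proof (cases "e \<in> snd G'")
    case True
    then have "x \<in> snd G' \<longleftrightarrow> x \<in> insert e (snd G)" for x using diff[of x] by auto
    then have "snd G' = insert e (snd G)" by blast
    then show thesis by (rule that(1))
  next
    case False
    then have "x \<in> snd G \<longleftrightarrow> x \<in> insert e (snd G')" for x using diff[of x] by auto
    then have "snd G = insert e (snd G')" by blast
    then show thesis by (rule that(2))
  qed
qed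

lemma max_density_sq_sensitivity:
  assumes "edge_neighboring G G'"
  shows "\<bar>max_density G ^ 2 - max_density G' ^ 2\<bar> \<le> 1"
proof -
  have G: "is_graph G" "is_graph G'" "fst G' = fst G"
    using assms unfolding edge_neighboring_def by auto
  have one_sided: "\<bar>max_density H ^ 2 - max_density H' ^ 2\<bar> \<le> 1"
    if "is_graph H" "is_graph H'" "fst H' = fst H" "snd H' = insert e (snd H)" for H H' e
  proof -
    note ins = max_density_insert_edge[OF that]
    have "max_density H ^ 2 \<le> max_density H' ^ 2"
      using ins(1) max_density_nonneg[OF that(1)] by (intro power_mono) auto
    then show ?thesis using ins(2) by linarith
  qed
  from assms show ?thesis
  proof (cases rule: edge_neighboring_insert_edge)
    case 1
    then show ?thesis using one_sided[OF G] by blast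
  next
    case 2
    then show ?thesis using one_sided[OF G(2,1) G(3)[symmetric]] by (simp add: abs_minus_commute)
  qed
qed

lemma nn_integral_abs_power_times_exp:
  "(\<integral>\<^sup>+ y. ennreal (\<bar>y\<bar> ^ k * exp (- \<bar>y\<bar>)) \<partial>lborel) = ennreal (2 * fact k)"
proof -
  let ?f = "\<lambda>y::real. ennreal (y ^ k * exp (- y))"
  have split: "ennreal (\<bar>y\<bar> ^ k * exp (- \<bar>y\<bar>)) =
      ?f y * indicator {0..} y + ?f (- y) * indicator {..<0} y" for y :: real
    by (cases "0 \<le> y") (auto simp: indicator_def)
  have "(\<integral>\<^sup>+ y. ?f (- y) * indicator {..<0} y \<partial>lborel) =
      (\<integral>\<^sup>+ y. ?f (- (0 + -1 * y)) * indicator {..<0} (0 + -1 * y) \<partial>lborel)"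
    using nn_integral_real_affine[of "\<lambda>y. ?f (- y) * indicator {..<0} y" "-1" 0] by simp
  also have "\<dots> = (\<integral>\<^sup>+ y. ?f y * indicator {0..} y \<partial>lborel)"
    by (intro nn_integral_cong_AE eventually_mono[OF AE_lborel_singleton[of 0]])
      (auto simp: indicator_def)
  finally have "(\<integral>\<^sup>+ y. ennreal (\<bar>y\<bar> ^ k * exp (- \<bar>y\<bar>)) \<partial>lborel) =
      (\<integral>\<^sup>+ y. ?f y * indicator {0..} y \<partial>lborel) + (\<integral>\<^sup>+ y. ?f y * indicator {0..} y \<partial>lborel)"
    unfolding split by (subst nn_integral_add) auto
  also have "\<dots> = ennreal (2 * fact k)"
    using nn_intergal_power_times_exp_Ici[of k] by (simp flip: ennreal_plus)
  finally show ?thesis .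
qed

definition laplace_density :: "real \<Rightarrow> real \<Rightarrow> real \<Rightarrow> real" where
  "laplace_density \<epsilon> \<mu> x = \<epsilon> / 2 * exp (- \<epsilon> * \<bar>x - \<mu>\<bar>)"

definition laplace :: "real \<Rightarrow> real \<Rightarrow> real measure" where
  \<comment> \<open>qualified, since Defs reuses the name density for graphs\<close>
  "laplace \<epsilon> \<mu> = Nonnegative_Lebesgue_Integration.density lborel (\<lambda>x. ennreal (laplace_density \<epsilon> \<mu> x))"

lemma laplace_density_nonneg: "0 \<le> \<epsilon> \<Longrightarrow> 0 \<le> laplace_density \<epsilon> \<mu> x"
  unfolding laplace_density_def by simp

lemma borel_measurable_laplace_density[measurable]: "laplace_density \<epsilon> \<mu> \<in> borel_measurable borel"
  unfolding laplace_density_def by measurable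

lemma sets_laplace[measurable_cong, simp]: "sets (laplace \<epsilon> \<mu>) = sets borel"
  unfolding laplace_def by simp

lemma space_laplace[simp]: "space (laplace \<epsilon> \<mu>) = UNIV"
  unfolding laplace_def by simp

lemma nn_integral_laplace_density_abs_moment:
  assumes "0 < \<epsilon>"
  shows "(\<integral>\<^sup>+ x. ennreal (laplace_density \<epsilon> \<mu> x * \<bar>x - \<mu>\<bar> ^ k) \<partial>lborel) = ennreal (fact k / \<epsilon> ^ k)"
proof -
  have rescale: "laplace_density \<epsilon> \<mu> (\<mu> + 1 / \<epsilon> * y) * \<bar>\<mu> + 1 / \<epsilon> * y - \<mu>\<bar> ^ k =
      \<epsilon> / (2 * \<epsilon> ^ k) * (\<bar>y\<bar> ^ k * exp (- \<bar>y\<bar>))" for y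
    using assms by (simp add: laplace_density_def abs_mult power_mult_distrib power_divide)
  have "(\<integral>\<^sup>+ x. ennreal (laplace_density \<epsilon> \<mu> x * \<bar>x - \<mu>\<bar> ^ k) \<partial>lborel) =
      ennreal \<bar>1 / \<epsilon>\<bar> * (\<integral>\<^sup>+ y. ennreal (laplace_density \<epsilon> \<mu> (\<mu> + 1 / \<epsilon> * y) * \<bar>\<mu> + 1 / \<epsilon> * y - \<mu>\<bar> ^ k) \<partial>lborel)"
    using assms by (intro nn_integral_real_affine) auto
  also have "\<dots> = ennreal (1 / \<epsilon>) * (\<integral>\<^sup>+ y. ennreal (\<epsilon> / (2 * \<epsilon> ^ k)) * ennreal (\<bar>y\<bar> ^ k * exp (- \<bar>y\<bar>)) \<partial>lborel)"
    unfolding rescale using assms by (intro arg_cong2[where f="(*)"] nn_integral_cong ennreal_mult') auto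
  also have "\<dots> = ennreal (1 / \<epsilon>) * (ennreal (\<epsilon> / (2 * \<epsilon> ^ k)) * ennreal (2 * fact k))"
    by (subst nn_integral_cmult) (auto simp: nn_integral_abs_power_times_exp)
  also have "\<dots> = ennreal (1 / \<epsilon> * (\<epsilon> / (2 * \<epsilon> ^ k) * (2 * fact k)))"
    using assms by (simp only: ennreal_mult divide_nonneg_nonneg mult_nonneg_nonneg zero_le_numeral
        zero_le_one fact_ge_zero zero_le_power less_imp_le)
  also have "1 / \<epsilon> * (\<epsilon> / (2 * \<epsilon> ^ k) * (2 * fact k)) = fact k / \<epsilon> ^ k"
    using assms by simp
  finally show ?thesis .
qed

lemma prob_space_laplace: "0 < \<epsilon> \<Longrightarrow> prob_space (laplace \<epsilon> \<mu>)"
  using nn_integral_laplace_density_abs_moment[of \<epsilon> \<mu> 0]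
  by (intro prob_spaceI) (simp add: laplace_def emeasure_density)

lemma laplace_density_shift_le:
  assumes "0 \<le> \<epsilon>" "\<bar>\<mu> - \<mu>'\<bar> \<le> \<Delta>"
  shows "laplace_density \<epsilon> \<mu> x \<le> exp (\<epsilon> * \<Delta>) * laplace_density \<epsilon> \<mu>' x"
proof -
  have "\<epsilon> * \<bar>x - \<mu>'\<bar> \<le> \<epsilon> * (\<bar>x - \<mu>\<bar> + \<Delta>)"
    using assms by (intro mult_left_mono) auto
  then have "exp (- \<epsilon> * \<bar>x - \<mu>\<bar>) \<le> exp (\<epsilon> * \<Delta>) * exp (- \<epsilon> * \<bar>x - \<mu>'\<bar>)"
    by (simp add: algebra_simps flip: exp_add)
  then have "\<epsilon> / 2 * exp (- \<epsilon> * \<bar>x - \<mu>\<bar>) \<le> \<epsilon> / 2 * (exp (\<epsilon> * \<Delta>) * exp (- \<epsilon> * \<bar>x - \<mu>'\<bar>))"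
    using assms(1) by (intro mult_left_mono) auto
  then show ?thesis
    unfolding laplace_density_def by (simp only: mult.left_commute)
qed

lemma measure_laplace_shift_le:
  assumes "0 < \<epsilon>" "\<bar>\<mu> - \<mu>'\<bar> \<le> \<Delta>" "B \<in> sets borel"
  shows "measure (laplace \<epsilon> \<mu>) B \<le> exp (\<epsilon> * \<Delta>) * measure (laplace \<epsilon> \<mu>') B"
proof -
  interpret L: prob_space "laplace \<epsilon> \<mu>" by (rule prob_space_laplace[OF assms(1)])
  interpret L': prob_space "laplace \<epsilon> \<mu>'" by (rule prob_space_laplace[OF assms(1)])
  have "emeasure (laplace \<epsilon> \<mu>) B = (\<integral>\<^sup>+ x. ennreal (laplace_density \<epsilon> \<mu> x) * indicator B x \<partial>lborel)"
    unfolding laplace_def using assms(3) by (simp add: emeasure_density)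
  also have "\<dots> \<le> (\<integral>\<^sup>+ x. ennreal (exp (\<epsilon> * \<Delta>)) * (ennreal (laplace_density \<epsilon> \<mu>' x) * indicator B x) \<partial>lborel)"
    using laplace_density_shift_le[of \<epsilon> \<mu> \<mu>' \<Delta>] assms
    by (intro nn_integral_mono) (auto simp: indicator_def laplace_density_nonneg simp flip: ennreal_mult)
  also have "\<dots> = ennreal (exp (\<epsilon> * \<Delta>)) * emeasure (laplace \<epsilon> \<mu>') B"
    unfolding laplace_def using assms(3) by (simp add: emeasure_density nn_integral_cmult)
  finally have "ennreal (measure (laplace \<epsilon> \<mu>) B) \<le> ennreal (exp (\<epsilon> * \<Delta>) * measure (laplace \<epsilon> \<mu>') B)"
    by (simp add: L.emeasure_eq_measure L'.emeasure_eq_measure ennreal_mult)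
  then show ?thesis by (simp add: ennreal_le_iff)
qed

lemma valid_algorithm_laplace_mechanism:
  assumes "0 < \<epsilon>" "g \<in> borel_measurable borel"
  shows "valid_algorithm (\<lambda>G. distr (laplace \<epsilon> (f G)) borel g)"
  unfolding valid_algorithm_def
proof (intro allI impI conjI)
  fix G
  interpret prob_space "laplace \<epsilon> (f G)" by (rule prob_space_laplace[OF assms(1)])
  show "prob_space (distr (laplace \<epsilon> (f G)) borel g)"
    using assms(2) by (intro prob_space_distr) simp
qed simp

lemma edge_DP_laplace_mechanism:
  assumes "0 < \<epsilon>" "g \<in> borel_measurable borel"
    and sensitivity: "\<And>G G'. edge_neighboring G G' \<Longrightarrow> \<bar>f G - f G'\<bar> \<le> 1"
  shows "edge_DP \<epsilon> (\<lambda>G. distr (laplace \<epsilon> (f G)) borel g)"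
  unfolding edge_DP_def
proof (intro allI impI)
  fix G G' and U :: "real set" assume "edge_neighboring G G'" "U \<in> sets borel"
  moreover have "g -` U \<in> sets borel" using measurable_sets[OF assms(2) \<open>U \<in> sets borel\<close>] by simp
  ultimately show "measure (distr (laplace \<epsilon> (f G)) borel g) U \<le> exp \<epsilon> * measure (distr (laplace \<epsilon> (f G')) borel g) U"
    using measure_laplace_shift_le[OF assms(1) sensitivity, of G G' "g -` U"] assms(2)
    by (simp add: measure_distr)
qed

lemma abs_sqrt_diff_le:
  assumes "0 \<le> x" "0 \<le> q"
  shows "\<bar>sqrt x - sqrt q\<bar> \<le> sqrt \<bar>x - q\<bar>"
proof (rule real_le_rsqrt)
  have "\<bar>sqrt x - sqrt q\<bar>\<^sup>2 \<le> \<bar>sqrt x - sqrt q\<bar> * (sqrt x + sqrt q)"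
    unfolding power2_eq_square using assms by (intro mult_left_mono) (auto simp: abs_le_iff)
  also have "\<dots> = \<bar>(sqrt x - sqrt q) * (sqrt x + sqrt q)\<bar>"
    using assms by (simp add: abs_mult)
  also have "(sqrt x - sqrt q) * (sqrt x + sqrt q) = x - q"
    using assms by (simp add: algebra_simps)
  finally show "\<bar>sqrt x - sqrt q\<bar>\<^sup>2 \<le> \<bar>x - q\<bar>" .
qed

lemma sqrt_le_am_gm:
  assumes "0 < a" "0 \<le> t"
  shows "sqrt t \<le> (a * t + 1 / a) / 2"
proof -
  have "0 \<le> (a * sqrt t - 1)\<^sup>2 / a" using assms by simp
  also have "\<dots> = a * t + 1 / a - 2 * sqrt t"
    using assms by (simp add: power2_eq_square field_simps)
  finally show ?thesis by simp
qed

text \<open>The weight a = sqrt \<epsilon> in the AM-GM bound balances the two resulting terms,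
  (a/2)(1/\<epsilon>) + 1/(2a) = 1 / sqrt \<epsilon>.\<close>

lemma nn_integral_sqrt_laplace_error:
  assumes "0 < \<epsilon>" "0 \<le> r"
  shows "(\<integral>\<^sup>+ x. ennreal \<bar>x - r\<bar> \<partial>distr (laplace \<epsilon> (r\<^sup>2)) borel (\<lambda>x. sqrt (max 0 x)))
    \<le> ennreal (1 / sqrt \<epsilon>)"
proof -
  define a where "a = sqrt \<epsilon>"
  have a: "0 < a" "a * a = \<epsilon>" unfolding a_def using assms(1) by auto
  let ?p = "laplace_density \<epsilon> (r\<^sup>2)"
  have p: "0 \<le> ?p x" for x using assms(1) by (simp add: laplace_density_nonneg)
  have pointwise: "?p x * \<bar>sqrt (max 0 x) - r\<bar>
      \<le> a / 2 * (?p x * \<bar>x - r\<^sup>2\<bar> ^ 1) + 1 / (2 * a) * (?p x * \<bar>x - r\<^sup>2\<bar> ^ 0)" for x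
  proof -
    have "\<bar>sqrt (max 0 x) - sqrt (r\<^sup>2)\<bar> \<le> sqrt \<bar>max 0 x - r\<^sup>2\<bar>"
      by (rule abs_sqrt_diff_le) auto
    also have "\<dots> \<le> sqrt \<bar>x - r\<^sup>2\<bar>" using zero_le_power2[of r] by (auto simp: max_def)
    also have "\<dots> \<le> (a * \<bar>x - r\<^sup>2\<bar> + 1 / a) / 2" using a by (intro sqrt_le_am_gm) auto
    finally have "?p x * \<bar>sqrt (max 0 x) - r\<bar> \<le> ?p x * ((a * \<bar>x - r\<^sup>2\<bar> + 1 / a) / 2)"
      using assms(2) p by (intro mult_left_mono) auto
    then show ?thesis by (simp add: field_simps)
  qed
  have "(\<integral>\<^sup>+ x. ennreal \<bar>x - r\<bar> \<partial>distr (laplace \<epsilon> (r\<^sup>2)) borel (\<lambda>x. sqrt (max 0 x)))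
      = (\<integral>\<^sup>+ x. ennreal (?p x * \<bar>sqrt (max 0 x) - r\<bar>) \<partial>lborel)"
    unfolding laplace_def by (simp add: nn_integral_distr nn_integral_density ennreal_mult p)
  also have "\<dots> \<le> (\<integral>\<^sup>+ x. ennreal (a / 2) * ennreal (?p x * \<bar>x - r\<^sup>2\<bar> ^ 1)
      + ennreal (1 / (2 * a)) * ennreal (?p x * \<bar>x - r\<^sup>2\<bar> ^ 0) \<partial>lborel)"
    using pointwise a p by (intro nn_integral_mono)
      (simp add: ennreal_leI flip: ennreal_mult ennreal_plus)
  also have "\<dots> = ennreal (a / 2) * ennreal (1 / \<epsilon>) + ennreal (1 / (2 * a)) * 1"
    using nn_integral_laplace_density_abs_moment[OF assms(1), of "r\<^sup>2" 1]
      nn_integral_laplace_density_abs_moment[OF assms(1), of "r\<^sup>2" 0]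
    by (subst nn_integral_add) (auto simp: nn_integral_cmult)
  also have "\<dots> = ennreal (a / 2 * (1 / \<epsilon>) + 1 / (2 * a))"
    using a assms(1) by (simp add: ennreal_plus flip: ennreal_mult')
  also have "a / 2 * (1 / \<epsilon>) + 1 / (2 * a) = 1 / sqrt \<epsilon>"
    using a assms(1) unfolding a_def[symmetric] by (simp add: field_simps)
  finally show ?thesis .
qed

theorem mainTheorem15:
  shows "\<exists>C::real. \<forall>\<epsilon>::real. 0 < \<epsilon> \<and> \<epsilon> \<le> 1 \<longrightarrow>
    (\<exists>A. valid_algorithm A \<and> edge_DP \<epsilon> A \<and>
       (\<forall>G. is_graph G \<longrightarrow>
          (\<integral>\<^sup>+ x. ennreal \<bar>x - max_density G\<bar> \<partial>(A G)) \<le> ennreal (C * sqrt (1 / \<epsilon>))))"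
proof (intro exI[of _ 1] allI impI)
  fix \<epsilon> :: real assume "0 < \<epsilon> \<and> \<epsilon> \<le> 1"
  then have \<epsilon>: "0 < \<epsilon>" by simp
  let ?A = "\<lambda>G. distr (laplace \<epsilon> (max_density G ^ 2)) borel (\<lambda>x. sqrt (max 0 x))"
  have "valid_algorithm ?A"
    by (rule valid_algorithm_laplace_mechanism[OF \<epsilon>]) measurable
  moreover have "edge_DP \<epsilon> ?A"
    by (rule edge_DP_laplace_mechanism[OF \<epsilon> _ max_density_sq_sensitivity]) measurable
  moreover have "(\<integral>\<^sup>+ x. ennreal \<bar>x - max_density G\<bar> \<partial>?A G) \<le> ennreal (1 * sqrt (1 / \<epsilon>))"
    if "is_graph G" for G
    using nn_integral_sqrt_laplace_error[OF \<epsilon> max_density_nonneg[OF that]]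
    by (simp add: real_sqrt_divide)
  ultimately show "\<exists>A. valid_algorithm A \<and> edge_DP \<epsilon> A \<and>
       (\<forall>G. is_graph G \<longrightarrow>
          (\<integral>\<^sup>+ x. ennreal \<bar>x - max_density G\<bar> \<partial>(A G)) \<le> ennreal (1 * sqrt (1 / \<epsilon>)))"
    by blast
qed

end
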